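(* Let $p\ge 1$, let $\mathbf{S}$ be a real symmetric positive semidefinite $p\times p$ matrix, let $\mathbf{T}$ be a real symmetric positive definite $p\times p$ matrix, and let $\lambda_a\in(0,\infty)$. Consider the penalized log-likelihood $$\mathcal{L}^{p}(\mathbf{\Omega}) = \ln|\mathbf{\Omega}| - \mathrm{tr}(\mathbf{S}\mathbf{\Omega}) - \frac{\lambda_a}{2}\,\mathrm{tr}\big[(\mathbf{\Omega}-\mathbf{T})^{\mathrm{T}}(\mathbf{\Omega}-\mathbf{T})\big]$$ over real symmetric positive definite $p\times p$ matrices $\mathbf{\Omega}$. Then $\mathcal{L}^p$ is maximized by $$\hat{\mathbf{\Omega}}^{\mathrm{I}a}(\lambda_a) = \Big\{\Big[\lambda_a\mathbf{I}_p + \tfrac14(\mathbf{S}-\lambda_a\mathbf{T})^2\Big]^{1/2} + \tfrac12(\mathbf{S}-\lambda_a\mathbf{T})\Big\}^{-1},$$ which is the solution of the stationarity equation $\mathbf{\Omega}^{-1} - (\mathbf{S}-\lambda_a\mathbf{T}) - \lambda_a\mathbf{\Omega} = \mathbf{0}$.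
   Context: $|\cdot|$ denotes the determinant, $\mathbf{I}_p$ the $p\times p$ identity matrix. For a real symmetric positive definite matrix $\mathbf{H}$, $\mathbf{H}^{1/2}$ denotes its unique symmetric positive definite square root. *)

theory Defs
  imports "HOL-Analysis.Analysis"
begin

definition sym_mat :: "real^'n^'n \<Rightarrow> bool" where
  "sym_mat A \<longleftrightarrow> transpose A = A"

definition psd_mat :: "real^'n^'n \<Rightarrow> bool" where
  "psd_mat A \<longleftrightarrow> sym_mat A \<and> (\<forall>x. x \<bullet> (A *v x) \<ge> 0)"

definition pd_mat :: "real^'n^'n \<Rightarrow> bool" where
  "pd_mat A \<longleftrightarrow> sym_mat A \<and> (\<forall>x. x \<noteq> 0 \<longrightarrow> x \<bullet> (A *v x) > 0)"

definition mat_sqrt :: "real^'n^'n \<Rightarrow> real^'n^'n" where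
  "mat_sqrt H = (THE R. pd_mat R \<and> R ** R = H)"

definition pen_loglik :: "real^'n^'n \<Rightarrow> real^'n^'n \<Rightarrow> real \<Rightarrow> real^'n^'n \<Rightarrow> real" where
  "pen_loglik S T lam \<Omega> =
     ln (det \<Omega>) - trace (S ** \<Omega>)
     - (lam / 2) * trace (transpose (\<Omega> - T) ** (\<Omega> - T))"

definition ridge_est :: "real^'n^'n \<Rightarrow> real^'n^'n \<Rightarrow> real \<Rightarrow> real^'n^'n" where
  "ridge_est S T lam =
     matrix_inv (mat_sqrt (mat lam + (1/4) *\<^sub>R ((S - lam *\<^sub>R T) ** (S - lam *\<^sub>R T)))
                 + (1/2) *\<^sub>R (S - lam *\<^sub>R T))"

end

theory Submission
  imports Defs
begin

text \<open>Diagonalise \<open>S - \<lambda>T = Q diag(a) Q\<^sup>T\<close> with \<open>Q\<close> orthogonal. The matrix under the square root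
is then \<open>Q diag(\<lambda> + a\<^sub>i\<^sup>2/4) Q\<^sup>T\<close>, so the estimator is \<open>Q diag(1/g\<^sub>i) Q\<^sup>T\<close> with
\<open>g\<^sub>i = sqrt(\<lambda> + a\<^sub>i\<^sup>2/4) + a\<^sub>i/2 > 0\<close>, the positive root of \<open>g\<^sup>2 - a\<^sub>i g - \<lambda> = 0\<close>; read
eigenvalue by eigenvalue, this is the stationarity equation. Optimality is concavity:
\<open>ln|\<Omega>| - ln|\<Omega>\<^sub>0| \<le> tr(\<Omega>\<^sub>0^(-1) (\<Omega> - \<Omega>\<^sub>0))\<close> follows from \<open>ln x \<le> x - 1\<close> applied to the
eigenvalues of the congruence \<open>\<Omega>\<^sub>0^(-1/2) \<Omega> \<Omega>\<^sub>0^(-1/2)\<close>, and inserting the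
stationarity equation leaves \<open>L(\<Omega>) - L(\<Omega>\<^sub>0) \<le> -(\<lambda>/2) tr((\<Omega> - \<Omega>\<^sub>0)\<^sup>T(\<Omega> - \<Omega>\<^sub>0)) \<le> 0\<close>.\<close>

lemma matrix_mul_add_rdistrib: "((A::real^'n^'m) + B) ** (C::real^'p^'n) = A ** C + B ** C"
  by (vector matrix_matrix_mult_def sum.distrib[symmetric] field_simps)

lemma matrix_mul_diff_rdistrib: "((A::real^'n^'m) - B) ** (C::real^'p^'n) = A ** C - B ** C"
  by (vector matrix_matrix_mult_def sum_subtractf[symmetric] field_simps)

lemma matrix_mul_diff_ldistrib: "(C::real^'n^'m) ** ((A::real^'p^'n) - B) = C ** A - C ** B"
  by (vector matrix_matrix_mult_def sum_subtractf[symmetric] field_simps)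

lemma matrix_mul_mat: "(A::real^'n^'m) ** mat c = c *\<^sub>R A"
  by (simp add: matrix_matrix_mult_def mat_def vec_eq_iff if_distrib if_distribR cong: if_cong)

lemma scaleR_mat_1: "c *\<^sub>R mat 1 = (mat c :: real^'n^'n)"
  by (simp add: mat_def vec_eq_iff)

lemma transpose_add: "transpose ((A::real^'n^'m) + B) = transpose A + transpose B"
  by (simp add: transpose_def vec_eq_iff)

lemma transpose_diff: "transpose ((A::real^'n^'m) - B) = transpose A - transpose B"
  by (simp add: transpose_def vec_eq_iff)

lemma trace_scaleR: "trace (c *\<^sub>R (A::real^'n^'n)) = c * trace A"
  by (simp add: trace_def sum_distrib_left)

lemma trace_transpose: "trace (transpose (A::real^'n^'n)) = trace A"
  by (simp add: trace_def transpose_def)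

lemma trace_transpose_mult_self_nonneg: "trace (transpose (A::real^'n^'n) ** A) \<ge> 0"
  by (simp add: trace_def matrix_matrix_mult_def transpose_def sum_nonneg)

lemma inner_matrix_vector_transpose: "x \<bullet> ((M::real^'n^'m) *v y) = (transpose M *v x) \<bullet> y"
  by (simp add: dot_lmul_matrix)

lemma sym_mat_inner:
  assumes "sym_mat A"
  shows "x \<bullet> (A *v y) = (A *v x) \<bullet> y"
  using assms by (simp add: inner_matrix_vector_transpose sym_mat_def)

lemma matrix_inv_unique:
  assumes "(M::real^'n^'n) ** N = mat 1" and "N ** M = mat 1"
  shows "matrix_inv M = N"
  unfolding matrix_inv_def
proof (rule someI2[of _ N])
  fix N' assume "M ** N' = mat 1 \<and> N' ** M = mat 1"
  then have "N' = N' ** (M ** N)" and "N' ** M = mat 1" using assms by auto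
  then show "N' = N" by (simp add: matrix_mul_assoc)
qed (use assms in simp)

definition diag_mat :: "real^'n \<Rightarrow> real^'n^'n" where
  "diag_mat d = (\<chi> i j. if i = j then d$i else 0)"

lemma matrix_mul_diag_mat_nth: "(M ** diag_mat d) $ i $ j = M$i$j * d$j"
  by (simp add: matrix_matrix_mult_def diag_mat_def if_distrib if_distribR cong: if_cong)

lemma diag_mat_matrix_mul_nth: "(diag_mat d ** M) $ i $ j = d$i * M$i$j"
  by (simp add: matrix_matrix_mult_def diag_mat_def if_distrib if_distribR cong: if_cong)

lemma diag_mat_mult_vector_nth: "(diag_mat d *v x) $ i = d$i * x$i"
  by (simp add: matrix_vector_mult_def diag_mat_def if_distrib if_distribR cong: if_cong)

lemma diag_mat_mult: "diag_mat a ** diag_mat b = diag_mat (\<chi> i. a$i * b$i)"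
  by (simp add: vec_eq_iff diag_mat_matrix_mul_nth) (simp add: diag_mat_def)

lemma diag_mat_zero: "diag_mat 0 = 0"
  by (simp add: diag_mat_def vec_eq_iff)

lemma diag_mat_add: "diag_mat a + diag_mat b = diag_mat (a + b)"
  by (simp add: diag_mat_def vec_eq_iff)

lemma diag_mat_diff: "diag_mat a - diag_mat b = diag_mat (a - b)"
  by (simp add: diag_mat_def vec_eq_iff)

lemma scaleR_diag_mat: "c *\<^sub>R diag_mat a = diag_mat (c *\<^sub>R a)"
  by (simp add: diag_mat_def vec_eq_iff)

lemma diag_mat_vec: "diag_mat (vec c) = mat c"
  by (simp add: diag_mat_def vec_eq_iff mat_def)

lemma transpose_diag_mat: "transpose (diag_mat a) = diag_mat a"
  by (simp add: diag_mat_def vec_eq_iff transpose_def)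

lemma det_diag_mat: "det (diag_mat a) = (\<Prod>i\<in>UNIV. a$i)"
  by (subst det_diagonal) (auto simp: diag_mat_def)

lemma trace_diag_mat: "trace (diag_mat a) = (\<Sum>i\<in>UNIV. a$i)"
  by (simp add: trace_def diag_mat_def)

subsection \<open>Spectral theorem for symmetric matrices\<close>

lemma sym_mat_eigenvector_in_invariant_subspace:
  fixes A :: "real^'n^'n"
  assumes sA: "sym_mat A" and V: "subspace V" "V \<noteq> {0}"
    and inv: "\<And>x. x \<in> V \<Longrightarrow> A *v x \<in> V"
  shows "\<exists>u\<in>V. norm u = 1 \<and> A *v u = (u \<bullet> (A *v u)) *\<^sub>R u"
proof -
  define q where "q x = x \<bullet> (A *v x)" for x :: "real^'n"
  let ?K = "V \<inter> sphere 0 1"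
  obtain x where "x \<in> V" "x \<noteq> 0" using V subspace_0 by blast
  then have "x /\<^sub>R norm x \<in> ?K" using V by (simp add: subspace_scale)
  moreover have "continuous_on ?K q" unfolding q_def by (intro continuous_intros)
  moreover have "compact ?K" by (intro closed_Int_compact closed_subspace V compact_sphere)
  ultimately obtain u where u: "u \<in> ?K" and umax: "\<And>y. y \<in> ?K \<Longrightarrow> q y \<le> q u"
    using continuous_attains_sup by (metis empty_iff)
  define c where "c = q u"
  have uV: "u \<in> V" and uu: "u \<bullet> u = 1" using u by (auto simp: norm_eq_1)
  have bound: "q y \<le> c * (y \<bullet> y)" if "y \<in> V" for y
  proof (cases "y = 0")
    case False
    then have "q (y /\<^sub>R norm y) \<le> c" using that V umax c_def by (simp add: subspace_scale)
    then have "q y / (norm y)^2 \<le> c"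
      by (simp add: q_def matrix_vector_mult_scaleR power2_eq_square divide_inverse mult_ac)
    then show ?thesis using False by (simp add: field_simps power2_norm_eq_inner)
  qed (simp add: q_def)
  define w where "w = A *v u - c *\<^sub>R u"
  have wV: "w \<in> V" unfolding w_def using inv uV V by (simp add: subspace_diff subspace_scale)
  have wu: "w \<bullet> u = 0" unfolding w_def c_def q_def using uu
    by (simp add: inner_diff_left inner_diff_right inner_commute)
  have wAu: "w \<bullet> (A *v u) = w \<bullet> w"
    using wu unfolding w_def by (simp add: algebra_simps)
  have uAw: "u \<bullet> (A *v w) = w \<bullet> w"
    using sym_mat_inner[OF sA, of u w] wAu by (simp add: inner_commute)
  \<comment> \<open>Maximality of \<open>u\<close> along the curve \<open>u + t w\<close> forces \<open>2 t |w|\<^sup>2 = O(t\<^sup>2)\<close>, so \<open>w = 0\<close>.\<close>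
  have second_order: "2 * t * (w \<bullet> w) \<le> t^2 * (c * (w \<bullet> w) - q w)" for t
  proof -
    have "u + t *\<^sub>R w \<in> V" using uV wV V by (simp add: subspace_add subspace_scale)
    from bound[OF this]
    have "c + 2 * t * (w \<bullet> w) + t^2 * q w \<le> c * (1 + t^2 * (w \<bullet> w))"
      using wAu uAw uu wu unfolding q_def c_def
      by (simp add: power2_eq_square algebra_simps inner_commute)
    then show ?thesis by (simp add: algebra_simps)
  qed
  have "w = 0"
  proof (rule ccontr)
    assume "w \<noteq> 0"
    then have p: "w \<bullet> w > 0" by simp
    define M where "M = c * (w \<bullet> w) - q w"
    define t where "t = (w \<bullet> w) / (\<bar>M\<bar> + 1)"
    have tp: "t > 0" using p by (simp add: t_def)
    have "2 * t * (w \<bullet> w) \<le> t^2 * M" using second_order M_def by simp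
    then have "2 * (w \<bullet> w) \<le> t * M" using tp by (simp add: power2_eq_square)
    also have "\<dots> \<le> t * \<bar>M\<bar>" using tp by (simp add: mult_left_mono)
    also have "\<dots> < w \<bullet> w" unfolding t_def using p by (simp add: field_simps)
    finally show False using p by simp
  qed
  then show ?thesis using uV u by (auto simp: w_def c_def q_def)
qed

lemma sym_mat_orthonormal_eigenvectors:
  fixes A :: "real^'n^'n"
  assumes sA: "sym_mat A" and "k \<le> CARD('n)"
  shows "\<exists>B. card B = k \<and> pairwise orthogonal B \<and>
           (\<forall>b\<in>B. norm b = 1 \<and> (\<exists>\<mu>. A *v b = \<mu> *\<^sub>R b))"
  using \<open>k \<le> CARD('n)\<close>
proof (induction k)
  case 0
  show ?case by (rule exI[of _ "{}"]) simp
next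
  case (Suc k)
  then obtain B where B: "card B = k" "pairwise orthogonal B"
    "\<And>b. b \<in> B \<Longrightarrow> norm b = 1 \<and> (\<exists>\<mu>. A *v b = \<mu> *\<^sub>R b)" by auto
  have indB: "independent B" using pairwise_orthogonal_independent[OF B(2)] B(3) by force
  have "span B \<noteq> UNIV"
  proof
    assume "span B = UNIV"
    then have "dim (UNIV :: (real^'n) set) = card B"
      using dim_span_eq_card_independent[OF indB] by simp
    then show False using Suc.prems B(1) by simp
  qed
  then obtain a :: "real^'n" where a: "a \<noteq> 0" "\<forall>x\<in>span B. a \<bullet> x = 0"
    using span_not_UNIV_orthogonal by blast
  define V where "V = {y. \<forall>x \<in> B. orthogonal x y}"
  have "a \<in> V" using a(2) span_base by (force simp: V_def orthogonal_def inner_commute)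
  then have "V \<noteq> {0}" using a(1) by blast
  moreover have "A *v y \<in> V" if "y \<in> V" for y
    unfolding V_def orthogonal_def
  proof (intro CollectI ballI)
    fix b assume bB: "b \<in> B"
    then obtain \<mu> where mu: "A *v b = \<mu> *\<^sub>R b" using B(3) by blast
    have "b \<bullet> y = 0" using that bB unfolding V_def orthogonal_def by blast
    then show "b \<bullet> (A *v y) = 0" using sym_mat_inner[OF sA, of b y] mu by simp
  qed
  moreover have "subspace V" unfolding V_def by (rule subspace_orthogonal_to_vectors)
  ultimately obtain u where u: "u \<in> V" "norm u = 1" "A *v u = (u \<bullet> (A *v u)) *\<^sub>R u"
    using sym_mat_eigenvector_in_invariant_subspace[OF sA] by blast
  have "u \<notin> B" using u unfolding V_def orthogonal_def by auto
  moreover have "finite B" using B(2) pairwise_orthogonal_imp_finite by blast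
  moreover have "pairwise orthogonal (insert u B)"
    using u(1) by (intro pairwise_orthogonal_insert[OF B(2)]) (simp add: V_def orthogonal_commute)
  ultimately show ?case using B u by (intro exI[of _ "insert u B"]) auto
qed

definition orth_diag :: "real^'n^'n \<Rightarrow> real^'n \<Rightarrow> real^'n^'n" where
  "orth_diag Q d = Q ** diag_mat d ** transpose Q"

theorem sym_mat_spectral:
  fixes A :: "real^'n^'n"
  assumes "sym_mat A"
  obtains Q d where "orthogonal_matrix Q" "A = orth_diag Q d"
proof -
  obtain B where B: "card B = CARD('n)" "pairwise orthogonal B"
    "\<And>b. b \<in> B \<Longrightarrow> norm b = 1 \<and> (\<exists>\<mu>. A *v b = \<mu> *\<^sub>R b)"
    using sym_mat_orthonormal_eigenvectors[OF assms, of "CARD('n)"] by auto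
  have "finite B" using B(2) pairwise_orthogonal_imp_finite by blast
  then obtain f where f: "bij_betw f (UNIV::'n set) B"
    using finite_same_card_bij B(1) by (metis finite_class.finite_UNIV)
  have fB: "f i \<in> B" for i using f by (auto simp: bij_betw_def)
  have [simp]: "norm (f i) = 1" for i using B(3) fB by blast
  have [simp]: "i \<noteq> j \<Longrightarrow> orthogonal (f i) (f j)" for i j
    using B(2) f by (auto simp: pairwise_def bij_betw_def inj_on_def)
  have "\<forall>i. \<exists>\<mu>. A *v f i = \<mu> *\<^sub>R f i" using B(3) fB by blast
  then obtain \<mu> where \<mu>: "\<And>i. A *v f i = \<mu> i *\<^sub>R f i" by metis
  define Q where "Q = (\<chi> i j. f j $ i)"
  have oQ: "orthogonal_matrix Q"
    unfolding Q_def by (simp add: orthogonal_matrix_orthonormal_columns column_def)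
  have "(A ** Q) $ i $ j = (A *v f j) $ i" for i j
    by (simp add: Q_def matrix_matrix_mult_def matrix_vector_mult_def)
  then have "A ** Q = Q ** diag_mat (\<chi> i. \<mu> i)"
    using \<mu> by (simp add: vec_eq_iff Q_def matrix_mul_diag_mat_nth)
  then have "A = orth_diag Q (\<chi> i. \<mu> i)"
    using oQ by (metis matrix_mul_assoc matrix_mul_rid orth_diag_def orthogonal_matrix_def)
  with oQ that show ?thesis by blast
qed

lemma orth_diag_mult:
  assumes "orthogonal_matrix Q"
  shows "orth_diag Q a ** orth_diag Q b = orth_diag Q (\<chi> i. a$i * b$i)"
proof -
  have "orth_diag Q a ** orth_diag Q b = Q ** diag_mat a ** (transpose Q ** Q) ** diag_mat b ** transpose Q"
    unfolding orth_diag_def by (simp add: matrix_mul_assoc)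
  also have "\<dots> = Q ** (diag_mat a ** diag_mat b) ** transpose Q"
    using assms by (simp add: orthogonal_matrix_def matrix_mul_assoc)
  finally show ?thesis by (simp add: diag_mat_mult orth_diag_def)
qed

lemma orth_diag_add: "orth_diag Q a + orth_diag Q b = orth_diag Q (a + b)"
  unfolding orth_diag_def
  by (simp add: matrix_mul_add_rdistrib matrix_add_ldistrib diag_mat_add[symmetric])

lemma orth_diag_diff: "orth_diag Q a - orth_diag Q b = orth_diag Q (a - b)"
  unfolding orth_diag_def
  by (simp add: matrix_mul_diff_rdistrib matrix_mul_diff_ldistrib diag_mat_diff[symmetric])

lemma scaleR_orth_diag: "c *\<^sub>R orth_diag Q a = orth_diag Q (c *\<^sub>R a)"
  unfolding orth_diag_def
  by (simp add: scaleR_diag_mat[symmetric] scalar_matrix_assoc matrix_scalar_ac)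

lemma orth_diag_vec: "orthogonal_matrix Q \<Longrightarrow> orth_diag Q (vec c) = mat c"
  unfolding orth_diag_def diag_mat_vec matrix_mul_mat
  by (simp add: orthogonal_matrix_def scalar_matrix_assoc[symmetric] scaleR_mat_1)

lemma orth_diag_zero: "orth_diag Q 0 = 0"
  by (simp add: orth_diag_def diag_mat_zero)

lemma sym_mat_orth_diag: "sym_mat (orth_diag Q a)"
  unfolding sym_mat_def orth_diag_def
  by (simp add: matrix_transpose_mul transpose_diag_mat matrix_mul_assoc)

lemma det_orth_diag: "orthogonal_matrix Q \<Longrightarrow> det (orth_diag Q a) = (\<Prod>i\<in>UNIV. a$i)"
  unfolding orth_diag_def
  by (simp add: det_mul det_diag_mat)
    (metis det_I det_mul det_transpose orthogonal_matrix)

lemma trace_orth_diag: "orthogonal_matrix Q \<Longrightarrow> trace (orth_diag Q a) = (\<Sum>i\<in>UNIV. a$i)"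
  unfolding orth_diag_def
  by (metis matrix_mul_assoc matrix_mul_rid orthogonal_matrix trace_diag_mat trace_mul_sym)

lemma inner_orth_diag:
  "x \<bullet> (orth_diag Q a *v x) = (\<Sum>i\<in>UNIV. a$i * ((transpose Q *v x)$i)^2)"
proof -
  have "x \<bullet> (orth_diag Q a *v x) = x \<bullet> (Q *v (diag_mat a *v (transpose Q *v x)))"
    unfolding orth_diag_def by (simp add: matrix_vector_mul_assoc matrix_mul_assoc del: transpose_matrix_vector)
  also have "\<dots> = (transpose Q *v x) \<bullet> (diag_mat a *v (transpose Q *v x))"
    by (simp only: inner_matrix_vector_transpose)
  finally show ?thesis
    by (simp add: inner_vec_def diag_mat_mult_vector_nth power2_eq_square mult_ac del: transpose_matrix_vector)
qed

lemma orth_diag_mult_column: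
  assumes "orthogonal_matrix Q"
  shows "orth_diag Q a *v (Q *v axis i 1) = a$i *\<^sub>R (Q *v axis i 1)"
proof -
  have "orth_diag Q a ** Q = Q ** diag_mat a"
    using assms unfolding orth_diag_def orthogonal_matrix by (metis matrix_mul_assoc matrix_mul_rid)
  then have "orth_diag Q a *v (Q *v axis i 1) = Q *v (diag_mat a *v axis i 1)"
    by (simp only: matrix_vector_mul_assoc)
  also have "diag_mat a *v axis i 1 = a$i *\<^sub>R axis i 1"
    by (simp add: vec_eq_iff diag_mat_mult_vector_nth axis_def)
  finally show ?thesis by (simp add: matrix_vector_mult_scaleR)
qed

lemma orthogonal_matrix_column_nonzero:
  assumes "orthogonal_matrix Q"
  shows "Q *v axis i 1 \<noteq> 0"
proof
  assume "Q *v axis i 1 = 0"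
  then have "(transpose Q ** Q) *v axis i 1 = 0"
    by (simp add: matrix_vector_mul_assoc[symmetric] del: transpose_matrix_vector)
  moreover have "transpose Q ** Q = mat 1" using assms by (simp add: orthogonal_matrix_def)
  ultimately show False by simp
qed

lemma pd_mat_orth_diag_iff:
  fixes Q :: "real^'n^'n"
  assumes "orthogonal_matrix Q"
  shows "pd_mat (orth_diag Q a) \<longleftrightarrow> (\<forall>i. a$i > 0)"
proof
  assume pd: "pd_mat (orth_diag Q a)"
  show "\<forall>i. a$i > 0"
  proof
    fix i
    let ?v = "Q *v axis i 1"
    have "?v \<noteq> 0" using assms by (rule orthogonal_matrix_column_nonzero)
    then have "0 < ?v \<bullet> (orth_diag Q a *v ?v)" and "0 < ?v \<bullet> ?v"
      using pd by (auto simp: pd_mat_def)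
    moreover have "?v \<bullet> (orth_diag Q a *v ?v) = a$i * (?v \<bullet> ?v)"
      by (simp add: orth_diag_mult_column[OF assms])
    ultimately show "a$i > 0" by (simp add: zero_less_mult_iff)
  qed
next
  assume a: "\<forall>i. a$i > 0"
  show "pd_mat (orth_diag Q a)"
    unfolding pd_mat_def
  proof (intro conjI allI impI sym_mat_orth_diag)
    fix x :: "real^'n" assume "x \<noteq> 0"
    define y where "y = transpose Q *v x"
    have "Q *v y = x" using assms
      by (simp add: y_def matrix_vector_mul_assoc orthogonal_matrix_def del: transpose_matrix_vector)
    then have "y \<noteq> 0" using \<open>x \<noteq> 0\<close> by auto
    then obtain i where i: "y$i \<noteq> 0" by (auto simp: vec_eq_iff)
    have "0 < (\<Sum>i\<in>UNIV. a$i * (y$i)^2)"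
      by (rule sum_pos2[of _ i]) (use a i in \<open>auto intro: mult_pos_pos simp: less_imp_le\<close>)
    then show "x \<bullet> (orth_diag Q a *v x) > 0" by (simp add: inner_orth_diag y_def del: transpose_matrix_vector)
  qed
qed

lemma pd_mat_spectral:
  assumes "pd_mat A"
  obtains Q d where "orthogonal_matrix Q" "A = orth_diag Q d" "\<And>i. d$i > 0"
  using assms sym_mat_spectral pd_mat_orth_diag_iff unfolding pd_mat_def by metis

lemma matrix_inv_orth_diag:
  assumes "orthogonal_matrix Q" and "\<And>i. a$i \<noteq> 0"
  shows "matrix_inv (orth_diag Q a) = orth_diag Q (\<chi> i. 1 / a$i)"
proof (rule matrix_inv_unique)
  have "(\<chi> i. a$i * (1 / a$i)) = vec 1" and "(\<chi> i. 1 / a$i * a$i) = vec 1"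
    using assms(2) by (simp_all add: vec_eq_iff)
  then show "orth_diag Q a ** orth_diag Q (\<chi> i. 1 / a$i) = mat 1"
    and "orth_diag Q (\<chi> i. 1 / a$i) ** orth_diag Q a = mat 1"
    by (simp_all only: orth_diag_mult[OF assms(1)] orth_diag_vec[OF assms(1)] vec_lambda_beta)
qed

lemma pd_mat_square_root_unique:
  assumes p1: "pd_mat (R1::real^'n^'n)" and p2: "pd_mat R2" and eq: "R1 ** R1 = R2 ** R2"
  shows "R1 = R2"
proof -
  define D where "D = R1 - R2"
  have sD: "sym_mat D" using p1 p2 unfolding D_def pd_mat_def sym_mat_def by (simp add: transpose_diff)
  obtain P d where oP: "orthogonal_matrix P" and Dd: "D = orth_diag P d"
    using sym_mat_spectral[OF sD] by blast
  \<comment> \<open>\<open>R1\<^sup>2 - R2\<^sup>2 = R1 D + D R2\<close>; on an eigenvector of \<open>D\<close> this is the eigenvalue times a positive number.\<close>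
  have "d$i = 0" for i
  proof -
    define v where "v = P *v axis i 1"
    have Dv: "D *v v = d$i *\<^sub>R v" unfolding Dd v_def by (rule orth_diag_mult_column[OF oP])
    have "0 = v \<bullet> ((R1 ** D + D ** R2) *v v)"
      using eq unfolding D_def by (simp add: matrix_mul_diff_ldistrib matrix_mul_diff_rdistrib)
    also have "\<dots> = v \<bullet> (R1 *v (D *v v)) + (D *v v) \<bullet> (R2 *v v)"
      by (simp add: matrix_vector_mult_add_rdistrib inner_add_right
          matrix_vector_mul_assoc[symmetric] sym_mat_inner[OF sD])
    also have "\<dots> = d$i * (v \<bullet> (R1 *v v) + v \<bullet> (R2 *v v))"
      by (simp add: Dv algebra_simps)
    finally show ?thesis
      using p1 p2 orthogonal_matrix_column_nonzero[OF oP] unfolding pd_mat_def v_def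
      by (metis add_pos_pos mult_eq_0_iff order_less_irrefl)
  qed
  then have "D = orth_diag P 0" using Dd by (metis vec_eq_iff zero_index)
  then show ?thesis unfolding D_def orth_diag_zero by simp
qed

lemma mat_sqrt_orth_diag:
  assumes o: "orthogonal_matrix Q" and pos: "\<And>i. a$i > 0"
  shows "mat_sqrt (orth_diag Q a) = orth_diag Q (\<chi> i. sqrt (a$i))"
proof -
  let ?R = "orth_diag Q (\<chi> i. sqrt (a$i))"
  have "(\<chi> i. sqrt (a$i) * sqrt (a$i)) = a" using pos by (simp add: vec_eq_iff less_imp_le)
  then have R: "pd_mat ?R \<and> ?R ** ?R = orth_diag Q a"
    using pos by (simp add: pd_mat_orth_diag_iff[OF o] orth_diag_mult[OF o])
  have "R' = ?R" if "pd_mat R' \<and> R' ** R' = orth_diag Q a" for R'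
    by (rule pd_mat_square_root_unique) (use that R in auto)
  with R show ?thesis
    unfolding mat_sqrt_def by (rule the_equality)
qed

subsection \<open>Concavity of the log-determinant\<close>

lemma pd_mat_det_pos: "pd_mat A \<Longrightarrow> det A > 0"
  by (metis pd_mat_spectral det_orth_diag prod_pos)

lemma ln_det_le_trace_minus_card:
  fixes N :: "real^'n^'n"
  assumes "pd_mat N"
  shows "ln (det N) \<le> trace N - real CARD('n)"
proof -
  obtain P \<nu> where oP: "orthogonal_matrix P" and N: "N = orth_diag P \<nu>" and pos: "\<And>i. \<nu>$i > 0"
    using pd_mat_spectral[OF assms] by blast
  have "ln (det N) = (\<Sum>i\<in>UNIV. ln (\<nu>$i))"
    unfolding N det_orth_diag[OF oP] by (rule ln_prod) (use pos in \<open>auto simp: less_imp_neq[symmetric]\<close>)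
  also have "\<dots> \<le> (\<Sum>i\<in>UNIV. \<nu>$i - 1)"
    by (rule sum_mono) (use pos in \<open>simp add: ln_le_minus_one\<close>)
  also have "\<dots> = trace N - real CARD('n)"
    by (simp add: N trace_orth_diag[OF oP] sum_subtractf)
  finally show ?thesis .
qed

lemma pd_mat_congruence:
  fixes \<Omega> K :: "real^'n^'n"
  assumes pd: "pd_mat \<Omega>" and K: "invertible K"
  shows "pd_mat (transpose K ** \<Omega> ** K)"
  unfolding pd_mat_def
proof (intro conjI allI impI)
  show "sym_mat (transpose K ** \<Omega> ** K)"
    using pd by (simp add: pd_mat_def sym_mat_def matrix_transpose_mul matrix_mul_assoc)
  fix x :: "real^'n" assume "x \<noteq> 0"
  then have "K *v x \<noteq> 0"
    using inj_matrix_vector_mult[OF K] by (metis injD matrix_vector_mult_0_right)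
  then have "0 < (K *v x) \<bullet> (\<Omega> *v (K *v x))" using pd by (simp add: pd_mat_def)
  also have "\<dots> = x \<bullet> (transpose K *v (\<Omega> *v (K *v x)))"
    by (simp only: inner_matrix_vector_transpose[of x] transpose_transpose)
  also have "\<dots> = x \<bullet> ((transpose K ** \<Omega> ** K) *v x)"
    by (simp only: matrix_vector_mul_assoc matrix_mul_assoc)
  finally show "x \<bullet> ((transpose K ** \<Omega> ** K) *v x) > 0" .
qed

lemma ln_det_le_trace_matrix_inv:
  fixes \<Omega>0 \<Omega> :: "real^'n^'n"
  assumes pd0: "pd_mat \<Omega>0" and pd: "pd_mat \<Omega>"
  shows "ln (det \<Omega>) - ln (det \<Omega>0) \<le> trace (matrix_inv \<Omega>0 ** (\<Omega> - \<Omega>0))"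
proof -
  obtain Q d where oQ: "orthogonal_matrix Q" and \<Omega>0: "\<Omega>0 = orth_diag Q d" and pos: "\<And>i. d$i > 0"
    using pd_mat_spectral[OF pd0] by blast
  have nz: "d$i \<noteq> 0" for i using pos[of i] by simp
  define M where "M = orth_diag Q (\<chi> i. 1 / d$i)"
  have M: "matrix_inv \<Omega>0 = M"
    unfolding \<Omega>0 M_def by (intro matrix_inv_orth_diag[OF oQ] nz)
  have "(\<chi> i. 1 / d$i * d$i) = vec 1" using nz by (simp add: vec_eq_iff)
  then have M\<Omega>0: "M ** \<Omega>0 = mat 1"
    unfolding M_def \<Omega>0 by (simp only: orth_diag_mult[OF oQ] orth_diag_vec[OF oQ] vec_lambda_beta)
  \<comment> \<open>Factor \<open>M = K K\<^sup>T\<close>; the congruence \<open>N = K\<^sup>T \<Omega> K\<close> is positive definite with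
      \<open>det N = det M det \<Omega>\<close> and \<open>tr N = tr (M \<Omega>)\<close>.\<close>
  define r where "r = (\<chi> i. 1 / sqrt (d$i))"
  define K where "K = Q ** diag_mat r"
  define K' where "K' = diag_mat (\<chi> i. sqrt (d$i)) ** transpose Q"
  have "K' ** K = diag_mat (\<chi> i. sqrt (d$i)) ** (transpose Q ** Q) ** diag_mat r"
    unfolding K_def K'_def by (simp only: matrix_mul_assoc)
  also have "\<dots> = diag_mat (\<chi> i. sqrt (d$i) * r$i)"
    using oQ by (simp add: orthogonal_matrix_def diag_mat_mult)
  also have "(\<chi> i. sqrt (d$i) * r$i) = vec 1" using nz by (simp add: r_def vec_eq_iff)
  finally have "K' ** K = mat 1" by (simp only: diag_mat_vec)
  then have "invertible K" using matrix_left_right_inverse unfolding invertible_def by blast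
  have "K ** transpose K = Q ** (diag_mat r ** diag_mat r) ** transpose Q"
    unfolding K_def by (simp add: matrix_transpose_mul transpose_diag_mat matrix_mul_assoc)
  also have "diag_mat r ** diag_mat r = diag_mat (\<chi> i. 1 / d$i)"
    using pos by (simp add: diag_mat_mult r_def less_imp_le)
  finally have KK: "K ** transpose K = M" unfolding M_def orth_diag_def .
  define N where "N = transpose K ** \<Omega> ** K"
  have "pd_mat N" unfolding N_def using pd \<open>invertible K\<close> by (rule pd_mat_congruence)
  have "det N = det M * det \<Omega>"
    unfolding N_def KK[symmetric] by (simp add: det_mul det_transpose)
  moreover have "det M * det \<Omega>0 = 1" using M\<Omega>0 by (metis det_I det_mul)
  ultimately have "det N = det \<Omega> / det \<Omega>0"
    using pd_mat_det_pos[OF pd0] by (simp add: field_simps)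
  then have "ln (det \<Omega>) - ln (det \<Omega>0) = ln (det N)"
    using pd_mat_det_pos[OF pd0] pd_mat_det_pos[OF pd] by (simp add: ln_div)
  also have "\<dots> \<le> trace N - real CARD('n)"
    using \<open>pd_mat N\<close> by (rule ln_det_le_trace_minus_card)
  also have "trace N = trace (M ** \<Omega>)"
    unfolding N_def KK[symmetric] by (metis matrix_mul_assoc trace_mul_sym)
  also have "real CARD('n) = trace (M ** \<Omega>0)" by (simp add: M\<Omega>0 trace_I)
  finally show ?thesis by (simp add: M matrix_mul_diff_ldistrib trace_sub)
qed

lemma trace_transpose_add_mult_self:
  fixes E D :: "real^'n^'n"
  assumes "sym_mat E"
  shows "trace (transpose (E + D) ** (E + D))
    = trace (transpose E ** E) + 2 * trace (E ** D) + trace (transpose D ** D)"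
proof -
  have "trace (transpose D ** E) = trace (E ** D)"
    using assms by (metis matrix_transpose_mul sym_mat_def trace_transpose trace_mul_sym)
  then show ?thesis using assms
    by (simp add: sym_mat_def transpose_add matrix_mul_add_rdistrib matrix_add_ldistrib trace_add)
qed

lemma pen_loglik_le_at_stationary_point:
  fixes S T \<Omega>0 \<Omega> :: "real^'n^'n"
  assumes pd0: "pd_mat \<Omega>0" and sT: "sym_mat T" and "lam \<ge> 0"
    and stat: "matrix_inv \<Omega>0 - (S - lam *\<^sub>R T) - lam *\<^sub>R \<Omega>0 = 0"
    and pd: "pd_mat \<Omega>"
  shows "pen_loglik S T lam \<Omega> \<le> pen_loglik S T lam \<Omega>0"
proof -
  define E where "E = \<Omega>0 - T"
  define D where "D = \<Omega> - \<Omega>0"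
  have "sym_mat E" using pd0 sT by (simp add: E_def pd_mat_def sym_mat_def transpose_diff)
  have "matrix_inv \<Omega>0 = (S - lam *\<^sub>R T) + lam *\<^sub>R \<Omega>0"
    using stat by (simp only: diff_diff_eq right_minus_eq)
  then have inv: "matrix_inv \<Omega>0 = S + lam *\<^sub>R E"
    by (simp add: E_def scaleR_diff_right algebra_simps)
  have "ln (det \<Omega>) - ln (det \<Omega>0) \<le> trace (S ** D) + lam * trace (E ** D)"
    using ln_det_le_trace_matrix_inv[OF pd0 pd]
    by (simp add: inv D_def matrix_mul_add_rdistrib trace_add scalar_matrix_assoc[symmetric] trace_scaleR)
  moreover have "trace (S ** \<Omega>) - trace (S ** \<Omega>0) = trace (S ** D)"
    by (simp add: D_def matrix_mul_diff_ldistrib trace_sub)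
  moreover have "trace (transpose (\<Omega> - T) ** (\<Omega> - T))
      = trace (transpose E ** E) + 2 * trace (E ** D) + trace (transpose D ** D)"
    using trace_transpose_add_mult_self[OF \<open>sym_mat E\<close>, of D] by (simp add: E_def D_def)
  moreover have "0 \<le> lam * trace (transpose D ** D)"
    by (intro mult_nonneg_nonneg \<open>lam \<ge> 0\<close> trace_transpose_mult_self_nonneg)
  ultimately show ?thesis
    unfolding pen_loglik_def E_def[symmetric] by (simp add: algebra_simps)
qed

subsection \<open>The ridge precision estimator\<close>

definition ridge_root :: "real \<Rightarrow> real \<Rightarrow> real" where
  "ridge_root lam a = sqrt (lam + a^2 / 4) + a / 2"

lemma ridge_root_pos:
  assumes "lam > 0"
  shows "ridge_root lam a > 0"
proof -
  have "\<bar>a / 2\<bar> = sqrt ((a / 2)^2)" by simp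
  also have "\<dots> < sqrt (lam + a^2 / 4)" using assms by (simp add: power_divide)
  finally show ?thesis by (simp add: ridge_root_def)
qed

lemma ridge_root_quadratic:
  assumes "lam \<ge> 0"
  shows "ridge_root lam a * (ridge_root lam a - a) = lam"
proof -
  have "lam + a^2 / 4 \<ge> 0" using assms by simp
  then show ?thesis
    by (simp add: ridge_root_def algebra_simps power2_eq_square[symmetric] power_divide)
qed

lemma ridge_est_orth_diag:
  assumes oQ: "orthogonal_matrix Q" and "lam > 0" and A: "S - lam *\<^sub>R T = orth_diag Q a"
  shows "ridge_est S T lam = orth_diag Q (\<chi> i. 1 / ridge_root lam (a$i))"
proof -
  define H where "H = mat lam + (1/4) *\<^sub>R ((S - lam *\<^sub>R T) ** (S - lam *\<^sub>R T))"
  have "H = orth_diag Q (vec lam + (1/4) *\<^sub>R (\<chi> i. a$i * a$i))"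
    unfolding H_def A orth_diag_vec[OF oQ, symmetric]
    by (simp add: orth_diag_mult[OF oQ] scaleR_orth_diag orth_diag_add)
  also have "vec lam + (1/4) *\<^sub>R (\<chi> i. a$i * a$i) = (\<chi> i. lam + (a$i)^2 / 4)"
    by (simp add: vec_eq_iff power2_eq_square)
  finally have H: "H = orth_diag Q (\<chi> i. lam + (a$i)^2 / 4)" .
  have "(\<chi> i. lam + (a$i)^2 / 4) $ i > 0" for i using \<open>lam > 0\<close> by (simp add: add_pos_nonneg)
  from mat_sqrt_orth_diag[OF oQ this]
  have "mat_sqrt H = orth_diag Q (\<chi> i. sqrt (lam + (a$i)^2 / 4))" unfolding H by simp
  moreover have "(\<chi> i. sqrt (lam + (a$i)^2 / 4)) + (1/2) *\<^sub>R a = (\<chi> i. ridge_root lam (a$i))"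
    by (simp add: vec_eq_iff ridge_root_def)
  ultimately have M: "mat_sqrt H + (1/2) *\<^sub>R (S - lam *\<^sub>R T) = orth_diag Q (\<chi> i. ridge_root lam (a$i))"
    by (simp add: A scaleR_orth_diag orth_diag_add)
  show ?thesis
    unfolding ridge_est_def H_def[symmetric] M using ridge_root_pos[OF \<open>lam > 0\<close>]
    by (subst matrix_inv_orth_diag[OF oQ]) (simp_all add: less_imp_neq[symmetric])
qed

lemma ridge_est_stationary:
  assumes "sym_mat S" and "sym_mat T" and "lam > 0"
  shows "pd_mat (ridge_est S T lam)"
    and "matrix_inv (ridge_est S T lam) - (S - lam *\<^sub>R T) - lam *\<^sub>R ridge_est S T lam = 0"
proof -
  have "sym_mat (S - lam *\<^sub>R T)"
    using assms by (simp add: sym_mat_def transpose_diff transpose_scalar)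
  then obtain Q a where oQ: "orthogonal_matrix Q" and A: "S - lam *\<^sub>R T = orth_diag Q a"
    by (rule sym_mat_spectral)
  define g where "g = (\<chi> i. ridge_root lam (a$i))"
  have gpos: "g$i > 0" for i using ridge_root_pos[OF \<open>lam > 0\<close>] by (simp add: g_def)
  have est: "ridge_est S T lam = orth_diag Q (\<chi> i. 1 / g$i)"
    using ridge_est_orth_diag[OF oQ \<open>lam > 0\<close> A] by (simp add: g_def)
  show "pd_mat (ridge_est S T lam)"
    unfolding est pd_mat_orth_diag_iff[OF oQ] using gpos by simp
  have "matrix_inv (ridge_est S T lam) = orth_diag Q g"
    unfolding est by (subst matrix_inv_orth_diag[OF oQ]) (use gpos in \<open>simp_all add: less_imp_neq[symmetric]\<close>)
  moreover have "g$i - a$i - lam * (1 / g$i) = 0" for i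
  proof -
    have "g$i * (g$i - a$i) = lam"
      unfolding g_def using ridge_root_quadratic \<open>lam > 0\<close> by simp
    then show ?thesis using gpos[of i] by (simp add: field_simps)
  qed
  then have "g - a - lam *\<^sub>R (\<chi> i. 1 / g$i) = 0" by (simp add: vec_eq_iff)
  ultimately show "matrix_inv (ridge_est S T lam) - (S - lam *\<^sub>R T) - lam *\<^sub>R ridge_est S T lam = 0"
    unfolding A est by (simp add: scaleR_orth_diag orth_diag_diff orth_diag_zero)
qed

theorem lemma1:
  fixes S T :: "real^'n^'n" and lam :: real
  assumes "psd_mat S" and "pd_mat T" and "lam > 0"
  shows "pd_mat (ridge_est S T lam)
    \<and> matrix_inv (ridge_est S T lam) - (S - lam *\<^sub>R T) - lam *\<^sub>R ridge_est S T lam = 0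
    \<and> (\<forall>\<Omega>. pd_mat \<Omega> \<longrightarrow> pen_loglik S T lam \<Omega> \<le> pen_loglik S T lam (ridge_est S T lam))"
proof -
  have "sym_mat S" and "sym_mat T" using assms(1,2) by (simp_all add: psd_mat_def pd_mat_def)
  note est = ridge_est_stationary[OF this \<open>lam > 0\<close>]
  have "pen_loglik S T lam \<Omega> \<le> pen_loglik S T lam (ridge_est S T lam)" if "pd_mat \<Omega>" for \<Omega>
    using pen_loglik_le_at_stationary_point[OF est(1) \<open>sym_mat T\<close> _ est(2) that] \<open>lam > 0\<close>
    by simp
  with est show ?thesis by blast
qed

end
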